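(* If $\Gamma$ is a flat Type $\mathcal A$ connection, then $\Gamma$ is linearly equivalent to $\Gamma_i^0$ for some $0\le i\le5$, where $\Gamma_0^0=\Gamma(0,0,0,0,0,0)$, $\Gamma_1^0=\Gamma(1,0,0,1,0,0)$, $\Gamma_2^0=\Gamma(-1,0,0,0,0,1)$, $\Gamma_3^0=\Gamma(0,0,0,0,0,1)$, $\Gamma_4^0=\Gamma(0,0,0,0,1,0)$, $\Gamma_5^0=\Gamma(1,0,0,1,-1,0)$. Furthermore, $\Gamma_i^0$ is not linearly equivalent to $\Gamma_j^0$ for $i\ne j$.
   Context: A torsion-free connection on $\mathbb R^2$ has Christoffel symbols $\nabla_{\partial_{x^i}}\partial_{x^j}=\Gamma_{ij}^k\partial_{x^k}$. For real constants, $\Gamma(a,b,c,d,e,f)$ denotes the connection on $\mathbb R^2$ whose Christoffel symbols in the standard coordinates $(x^1,x^2)$ are the constants $\Gamma_{11}^1=a$, $\Gamma_{11}^2=b$, $\Gamma_{12}^1=\Gamma_{21}^1=c$, $\Gamma_{12}^2=\Gamma_{21}^2=d$, $\Gamma_{22}^1=e$, $\Gamma_{22}^2=f$; a Type $\mathcal A$ connection is one of this form. Flat means the curvature tensor vanishes. Two Type $\mathcal A$ connections are linearly equivalent if there is $T\in GL(2,\mathbb R)$ with $T^*\nabla_2=\nabla_1$ (they differ by a linear change of coordinates). *)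

theory Defs
  imports "HOL-Analysis.Analysis"
begin

text \<open>Affine connections on R^2 with constant Christoffel symbols (Type A).
  Coordinates are indexed by the two-element type 2, with index 1 standing for x^1
  and index 2 (= 0 in type 2) for x^2.  A connection is given by its Christoffel
  symbols: G i j k = Gamma_{ij}^k, i.e. nabla_{d_i} d_j = sum_k G i j k d_k.\<close>

type_synonym conn = "2 \<Rightarrow> 2 \<Rightarrow> 2 \<Rightarrow> real"

definition Gam :: "real \<Rightarrow> real \<Rightarrow> real \<Rightarrow> real \<Rightarrow> real \<Rightarrow> real \<Rightarrow> conn" where
  "Gam a b c d e f = (\<lambda>i j k.
     if i = 1 \<and> j = 1 then (if k = 1 then a else b)
     else if i = 2 \<and> j = 2 then (if k = 1 then e else f)
     else (if k = 1 then c else d))"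

text \<open>Curvature of a connection with constant Christoffel symbols:
  R(d_i,d_j)d_k = nabla_i nabla_j d_k - nabla_j nabla_i d_k = sum_l R i j k l d_l
  (derivative terms vanish since the symbols are constant).\<close>

definition curv :: "conn \<Rightarrow> 2 \<Rightarrow> 2 \<Rightarrow> 2 \<Rightarrow> 2 \<Rightarrow> real" where
  "curv G i j k l = (\<Sum>m\<in>UNIV. G j k m * G i m l - G i k m * G j m l)"

definition flat :: "conn \<Rightarrow> bool" where
  "flat G \<longleftrightarrow> (\<forall>i j k l. curv G i j k l = 0)"

text \<open>Pullback of a constant-coefficient connection by the linear map x \<mapsto> T x:
  T_* d_i = sum_a T$a$i d_a, and (T^* nabla)_X Y = T^{-1}_* (nabla_{T_* X} T_* Y).\<close>

definition pullback :: "real^2^2 \<Rightarrow> conn \<Rightarrow> conn" where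
  "pullback T G = (\<lambda>i j k. \<Sum>c\<in>UNIV. matrix_inv T $ k $ c *
       (\<Sum>a\<in>UNIV. \<Sum>b\<in>UNIV. G a b c * T $ a $ i * T $ b $ j))"

definition lin_equiv :: "conn \<Rightarrow> conn \<Rightarrow> bool" where
  "lin_equiv G1 G2 \<longleftrightarrow> (\<exists>T::real^2^2. invertible T \<and> pullback T G2 = G1)"

definition Gamma0 :: "nat \<Rightarrow> conn" where
  "Gamma0 i = (if i = 0 then Gam 0 0 0 0 0 0
     else if i = 1 then Gam 1 0 0 1 0 0
     else if i = 2 then Gam (-1) 0 0 0 0 1
     else if i = 3 then Gam 0 0 0 0 0 1
     else if i = 4 then Gam 0 0 0 0 1 0
     else Gam 1 0 0 1 (-1) 0)"

end

theory Submission
  imports Defs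
begin

text \<open>A Type A connection is a commutative product \<open>x \<circ> y = \<nabla>\<^sub>x y\<close> on \<open>\<real>\<^sup>2\<close>, linear
  equivalence is isomorphism of such products, and flatness says \<open>x \<circ> (y \<circ> z) = y \<circ> (x \<circ> z)\<close>.
  If the product does not vanish, some \<open>x\<close> is independent of \<open>x\<^sup>2 = x \<circ> x\<close>; in the basis
  \<open>(x, x\<^sup>2)\<close> the Cayley--Hamilton relation \<open>x\<^sup>3 = \<sigma> x\<^sup>2 - \<tau> x\<close> for multiplication by \<open>x\<close>
  and flatness determine the product from \<open>(\<sigma>, \<tau>)\<close> alone.  The vanishing of \<open>\<tau>\<close> and \<open>\<sigma>\<close>
  and the sign of \<open>\<sigma>\<^sup>2 - 4\<tau>\<close> then give \<open>\<Gamma>\<^sub>1\<^sup>0,\<dots>,\<Gamma>\<^sub>5\<^sup>0\<close>.  The six normal forms are told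
  apart by the polynomial equations an isomorphism would have to satisfy; since \<open>\<Gamma>\<^sub>2\<^sup>0\<close>
  and \<open>\<Gamma>\<^sub>5\<^sup>0\<close> (the algebras \<open>\<real> \<times> \<real>\<close> and \<open>\<complex>\<close>) become isomorphic over \<open>\<complex>\<close>, that pair
  needs a sum-of-squares argument.\<close>

lemma matrix_inv_eqI:
  fixes A B :: "'a::field^'n^'n"
  assumes "A ** B = mat 1" "B ** A = mat 1"
  shows "matrix_inv A = B"
proof -
  have "A ** matrix_inv A = mat 1 \<and> matrix_inv A ** A = mat 1"
    unfolding matrix_inv_def by (rule someI[of _ B]) (use assms in blast)
  then have "B = B ** (A ** matrix_inv A)" by simp
  also have "\<dots> = matrix_inv A" by (simp add: matrix_mul_assoc assms(2))
  finally show ?thesis by simp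
qed

lemma matrix_mul_inv:
  fixes A :: "'a::semiring_1^'n^'m"
  assumes "invertible A"
  shows "A ** matrix_inv A = mat 1" "matrix_inv A ** A = mat 1"
  using someI_ex[OF assms[unfolded invertible_def]] unfolding matrix_inv_def by auto

lemma matrix_inv_mult:
  fixes A B :: "'a::field^'n^'n"
  assumes "invertible A" "invertible B"
  shows "matrix_inv (A ** B) = matrix_inv B ** matrix_inv A"
proof (rule matrix_inv_eqI)
  show "A ** B ** (matrix_inv B ** matrix_inv A) = mat 1"
    by (metis assms matrix_mul_inv matrix_mul_assoc matrix_mul_rid)
  show "matrix_inv B ** matrix_inv A ** (A ** B) = mat 1"
    by (metis assms matrix_mul_inv matrix_mul_assoc matrix_mul_rid)
qed

lemma invertible_matrix_inv:
  fixes A :: "'a::field^'n^'n"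
  shows "invertible A \<Longrightarrow> invertible (matrix_inv A)"
  using matrix_mul_inv unfolding invertible_def by blast

lemma matrix_inv_vector_eq_iff:
  fixes A :: "'a::field^'n^'n"
  assumes "invertible A"
  shows "matrix_inv A *v x = y \<longleftrightarrow> x = A *v y"
  by (metis assms matrix_mul_inv matrix_vector_mul_assoc matrix_vector_mul_lid)

lemma pullback_pullback:
  assumes "invertible T" "invertible S"
  shows "pullback S (pullback T G) = pullback (T ** S) G"
  unfolding pullback_def matrix_inv_mult[OF assms]
  by (simp add: fun_eq_iff matrix_matrix_mult_def sum_2 algebra_simps)

lemma pullback_mat_1: "pullback (mat 1) G = G"
proof -
  have "matrix_inv (mat 1 :: real^2^2) = mat 1" by (rule matrix_inv_eqI) simp_all
  then show ?thesis unfolding pullback_def by (simp add: fun_eq_iff sum_2 mat_def forall_2)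
qed

definition conn_mult :: "conn \<Rightarrow> real^2 \<Rightarrow> real^2 \<Rightarrow> real^2" where
  "conn_mult G x y = (\<chi> k. \<Sum>i\<in>UNIV. \<Sum>j\<in>UNIV. G i j k * x$i * y$j)"

lemma pullback_eq_iff:
  assumes "invertible T"
  shows "pullback T G = G' \<longleftrightarrow>
    (\<forall>i j. conn_mult G (column i T) (column j T) = T *v (\<chi> k. G' i j k))"
proof -
  have "pullback T G i j = (\<lambda>k. (matrix_inv T *v conn_mult G (column i T) (column j T)) $ k)" for i j
    by (simp add: pullback_def conn_mult_def matrix_vector_mult_def column_def fun_eq_iff)
  then have "pullback T G = G' \<longleftrightarrow>
      (\<forall>i j. matrix_inv T *v conn_mult G (column i T) (column j T) = (\<chi> k. G' i j k))"
    by (auto simp: fun_eq_iff vec_eq_iff)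
  then show ?thesis using matrix_inv_vector_eq_iff[OF assms] by simp
qed

definition mat2 :: "real \<Rightarrow> real \<Rightarrow> real \<Rightarrow> real \<Rightarrow> real^2^2" where
  "mat2 p q r s = (\<chi> i j. if i = 1 then (if j = 1 then p else q) else (if j = 1 then r else s))"

lemma mat2_nth [simp]:
  "mat2 p q r s $ 1 $ 1 = p" "mat2 p q r s $ 1 $ 2 = q"
  "mat2 p q r s $ 2 $ 1 = r" "mat2 p q r s $ 2 $ 2 = s"
  by (simp_all add: mat2_def)

lemma mat2_eta: "T = mat2 (T$1$1) (T$1$2) (T$2$1) (T$2$2)"
  by (simp add: vec_eq_iff forall_2)

lemma invertible_mat2_iff: "invertible (mat2 p q r s) \<longleftrightarrow> p * s - q * r \<noteq> 0"
  by (simp add: invertible_det_nz det_2)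

text \<open>\<open>bil a c e\<close> and \<open>bil b d f\<close> are the two components of the product of
  \<open>Gam a b c d e f\<close>; \<open>Gam_hom \<dots> p q r s\<close> says that \<open>mat2 p q r s\<close>, with columns
  \<open>(p, r)\<close> and \<open>(q, s)\<close>, carries the product of the first connection to that of the second.\<close>

definition bil :: "real \<Rightarrow> real \<Rightarrow> real \<Rightarrow> real \<Rightarrow> real \<Rightarrow> real \<Rightarrow> real \<Rightarrow> real" where
  "bil a c e x1 x2 y1 y2 = x1 * y1 * a + (x1 * y2 + x2 * y1) * c + x2 * y2 * e"

definition Gam_hom :: "real \<Rightarrow> real \<Rightarrow> real \<Rightarrow> real \<Rightarrow> real \<Rightarrow> real \<Rightarrow>
    real \<Rightarrow> real \<Rightarrow> real \<Rightarrow> real \<Rightarrow> real \<Rightarrow> real \<Rightarrow> real \<Rightarrow> real \<Rightarrow> real \<Rightarrow> real \<Rightarrow> bool" where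
  "Gam_hom a' b' c' d' e' f' a b c d e f p q r s \<longleftrightarrow>
     bil a c e p r p r = a' * p + b' * q \<and> bil b d f p r p r = a' * r + b' * s \<and>
     bil a c e p r q s = c' * p + d' * q \<and> bil b d f p r q s = c' * r + d' * s \<and>
     bil a c e q s q s = e' * p + f' * q \<and> bil b d f q s q s = e' * r + f' * s"

lemma pullback_mat2_Gam_eq_iff:
  assumes "p * s - q * r \<noteq> 0"
  shows "pullback (mat2 p q r s) (Gam a b c d e f) = Gam a' b' c' d' e' f' \<longleftrightarrow>
    Gam_hom a' b' c' d' e' f' a b c d e f p q r s"
  using assms
  by (simp add: pullback_eq_iff invertible_mat2_iff conn_mult_def column_def matrix_vector_mult_def
      vec_eq_iff forall_2 sum_2 Gam_def Gam_hom_def bil_def algebra_simps) (auto simp: algebra_simps)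

lemma lin_equiv_Gam_iff:
  "lin_equiv (Gam a' b' c' d' e' f') (Gam a b c d e f) \<longleftrightarrow>
   (\<exists>p q r s. p * s - q * r \<noteq> 0 \<and> Gam_hom a' b' c' d' e' f' a b c d e f p q r s)"
  unfolding lin_equiv_def
  by (metis mat2_eta invertible_mat2_iff pullback_mat2_Gam_eq_iff)

lemma lin_equiv_refl: "lin_equiv G G"
  unfolding lin_equiv_def invertible_def by (metis matrix_mul_lid pullback_mat_1)

lemma lin_equiv_sym:
  assumes "lin_equiv G1 G2"
  shows "lin_equiv G2 G1"
proof -
  obtain T where T: "invertible T" "pullback T G2 = G1"
    using assms unfolding lin_equiv_def by blast
  have "pullback (matrix_inv T) G1 = pullback (T ** matrix_inv T) G2"
    unfolding T(2)[symmetric] using T(1) by (simp add: pullback_pullback invertible_matrix_inv)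
  also have "\<dots> = G2"
    using T(1) by (simp add: matrix_mul_inv pullback_mat_1)
  finally show ?thesis
    unfolding lin_equiv_def using T(1) invertible_matrix_inv by blast
qed

lemma lin_equiv_trans:
  assumes "lin_equiv G1 G2" "lin_equiv G2 G3"
  shows "lin_equiv G1 G3"
proof -
  obtain T S where "invertible T" "pullback T G2 = G1" "invertible S" "pullback S G3 = G2"
    using assms unfolding lin_equiv_def by blast
  then show ?thesis
    unfolding lin_equiv_def by (metis invertible_mult pullback_pullback)
qed

lemma lin_equiv_GamI:
  "Gam_hom a' b' c' d' e' f' a b c d e f p q r s \<Longrightarrow> p * s - q * r \<noteq> 0 \<Longrightarrow>
   lin_equiv (Gam a' b' c' d' e' f') (Gam a b c d e f)"
  unfolding lin_equiv_Gam_iff by blast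

lemma bil_commute: "bil a c e x1 x2 y1 y2 = bil a c e y1 y2 x1 x2"
  by (simp add: bil_def algebra_simps)

lemma bil_linear_right:
  "bil a c e x1 x2 (u * y1 + v * z1) (u * y2 + v * z2) = u * bil a c e x1 x2 y1 y2 + v * bil a c e x1 x2 z1 z2"
  by (simp add: bil_def algebra_simps)

lemma flat_Gam_iff:
  "flat (Gam a b c d e f) \<longleftrightarrow>
   b * e = c * d \<and> b * c + d * d = a * d + b * f \<and> a * e + c * f = c * c + d * e"
  by (simp add: flat_def curv_def forall_2 sum_2 Gam_def) (auto simp: algebra_simps)

lemma bil_left_commute:
  assumes "b * e = c * d" "b * c + d * d = a * d + b * f" "a * e + c * f = c * c + d * e"
  shows "bil a c e x1 x2 (bil a c e y1 y2 z1 z2) (bil b d f y1 y2 z1 z2) =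
         bil a c e y1 y2 (bil a c e x1 x2 z1 z2) (bil b d f x1 x2 z1 z2)"
    and "bil b d f x1 x2 (bil a c e y1 y2 z1 z2) (bil b d f y1 y2 z1 z2) =
         bil b d f y1 y2 (bil a c e x1 x2 z1 z2) (bil b d f x1 x2 z1 z2)"
proof -
  have "bil a c e x1 x2 (bil a c e y1 y2 z1 z2) (bil b d f y1 y2 z1 z2) -
        bil a c e y1 y2 (bil a c e x1 x2 z1 z2) (bil b d f x1 x2 z1 z2) =
        (x1 * y2 - x2 * y1) * (z1 * (c * d - b * e) + z2 * (a * e + c * f - c * c - d * e))"
    and "bil b d f x1 x2 (bil a c e y1 y2 z1 z2) (bil b d f y1 y2 z1 z2) -
        bil b d f y1 y2 (bil a c e x1 x2 z1 z2) (bil b d f x1 x2 z1 z2) =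
        (x1 * y2 - x2 * y1) * (z1 * (b * c + d * d - a * d - b * f) + z2 * (b * e - c * d))"
    by (simp_all add: bil_def algebra_simps)
  with assms show "bil a c e x1 x2 (bil a c e y1 y2 z1 z2) (bil b d f y1 y2 z1 z2) =
         bil a c e y1 y2 (bil a c e x1 x2 z1 z2) (bil b d f x1 x2 z1 z2)"
    and "bil b d f x1 x2 (bil a c e y1 y2 z1 z2) (bil b d f y1 y2 z1 z2) =
         bil b d f y1 y2 (bil a c e x1 x2 z1 z2) (bil b d f x1 x2 z1 z2)"
    by auto
qed

text \<open>The product in the basis \<open>(x, x\<^sup>2)\<close> when \<open>x\<^sup>3 = \<sigma> x\<^sup>2 - \<tau> x\<close>.\<close>

definition Gam_cyclic :: "real \<Rightarrow> real \<Rightarrow> conn" where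
  "Gam_cyclic \<sigma> \<tau> = Gam 0 1 (-\<tau>) \<sigma> (-\<sigma> * \<tau>) (\<sigma> * \<sigma> - \<tau>)"

text \<open>\<open>\<sigma>\<close> and \<open>\<tau>\<close> are the trace and determinant of multiplication by \<open>x = (x1, x2)\<close>,
  and \<open>(q, s) = x\<^sup>2\<close>.\<close>

lemma Gam_hom_cyclic:
  fixes x1 x2 :: real
  assumes flat: "b * e = c * d" "b * c + d * d = a * d + b * f" "a * e + c * f = c * c + d * e"
  defines "q \<equiv> bil a c e x1 x2 x1 x2" and "s \<equiv> bil b d f x1 x2 x1 x2"
    and "\<sigma> \<equiv> x1 * a + x2 * c + x1 * d + x2 * f"
    and "\<tau> \<equiv> (x1 * a + x2 * c) * (x1 * d + x2 * f) - (x1 * c + x2 * e) * (x1 * b + x2 * d)"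
  shows "Gam_hom 0 1 (-\<tau>) \<sigma> (-\<sigma> * \<tau>) (\<sigma> * \<sigma> - \<tau>) a b c d e f x1 q x2 s"
proof -
  have cube1: "bil a c e x1 x2 q s = - \<tau> * x1 + \<sigma> * q"
    and cube2: "bil b d f x1 x2 q s = - \<tau> * x2 + \<sigma> * s"
    unfolding q_def s_def \<sigma>_def \<tau>_def bil_def by algebra+
  have comm1: "bil a c e q s x1 x2 = - \<tau> * x1 + \<sigma> * q"
    and comm2: "bil b d f q s x1 x2 = - \<tau> * x2 + \<sigma> * s"
    using cube1 cube2 bil_commute by metis+
  have "bil a c e q s q s = bil a c e x1 x2 (bil a c e q s x1 x2) (bil b d f q s x1 x2)"
    using bil_left_commute(1)[OF flat, of q s x1 x2 x1 x2] by (fold q_def s_def)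
  also have "\<dots> = - \<tau> * q + \<sigma> * (- \<tau> * x1 + \<sigma> * q)"
    unfolding comm1 comm2 bil_linear_right cube1 by (fold q_def) (rule refl)
  finally have fourth1: "bil a c e q s q s = - \<sigma> * \<tau> * x1 + (\<sigma> * \<sigma> - \<tau>) * q"
    by (simp add: algebra_simps)
  have "bil b d f q s q s = bil b d f x1 x2 (bil a c e q s x1 x2) (bil b d f q s x1 x2)"
    using bil_left_commute(2)[OF flat, of q s x1 x2 x1 x2] by (fold q_def s_def)
  also have "\<dots> = - \<tau> * s + \<sigma> * (- \<tau> * x2 + \<sigma> * s)"
    unfolding comm1 comm2 bil_linear_right cube2 by (fold s_def) (rule refl)
  finally have fourth2: "bil b d f q s q s = - \<sigma> * \<tau> * x2 + (\<sigma> * \<sigma> - \<tau>) * s"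
    by (simp add: algebra_simps)
  show ?thesis
    unfolding Gam_hom_def using cube1 cube2 fourth1 fourth2 by (simp add: q_def s_def)
qed

text \<open>The columns of the isomorphisms below are written in the basis \<open>(x, x\<^sup>2)\<close>.  For
  \<open>\<tau> \<noteq> 0\<close>, \<open>u = (\<sigma> x - x\<^sup>2) / \<tau>\<close> is the unit and \<open>n = x - \<sigma> u / 2\<close> satisfies
  \<open>n\<^sup>2 = (\<sigma>\<^sup>2 / 4 - \<tau>) u\<close>; with \<open>k\<^sup>2 = \<bar>\<sigma>\<^sup>2 / 4 - \<tau>\<bar>\<close> the columns are \<open>(u, n)\<close>,
  the idempotents \<open>(u \<mp> n / k) / 2\<close> (the first negated), or \<open>(u, n / k)\<close> with
  \<open>(n / k)\<^sup>2 = - u\<close>.\<close>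

lemma lin_equiv_Gamma0_1_Gam_cyclic:
  assumes "\<tau> \<noteq> 0" "\<sigma> * \<sigma> = 4 * \<tau>"
  shows "lin_equiv (Gamma0 1) (Gam_cyclic \<sigma> \<tau>)"
proof -
  have "Gam_hom 1 0 0 1 0 0 0 1 (-\<tau>) \<sigma> (-\<sigma> * \<tau>) (\<sigma> * \<sigma> - \<tau>)
      (\<sigma> / \<tau>) (1 - \<sigma> * \<sigma> / (2 * \<tau>)) (-1 / \<tau>) (\<sigma> / (2 * \<tau>))"
    unfolding Gam_hom_def bil_def using assms by (simp add: field_simps)
  moreover have "\<sigma> / \<tau> * (\<sigma> / (2 * \<tau>)) - (1 - \<sigma> * \<sigma> / (2 * \<tau>)) * (-1 / \<tau>) \<noteq> 0"
    using assms(1) by (simp add: field_simps)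
  ultimately show ?thesis
    unfolding Gamma0_def Gam_cyclic_def by (simp add: lin_equiv_GamI)
qed

lemma lin_equiv_Gamma0_2_Gam_cyclic:
  assumes "\<tau> \<noteq> 0" "\<sigma> * \<sigma> > 4 * \<tau>"
  shows "lin_equiv (Gamma0 2) (Gam_cyclic \<sigma> \<tau>)"
proof -
  define k where "k = sqrt (\<sigma> * \<sigma> - 4 * \<tau>) / 2"
  have k: "k \<noteq> 0" "4 * k * k = \<sigma> * \<sigma> - 4 * \<tau>"
    using assms(2) by (auto simp: k_def)
  define u1 u2 n1 n2 where "u1 = \<sigma> / \<tau>" "u2 = -1 / \<tau>"
    and "n1 = 1 - \<sigma> * \<sigma> / (2 * \<tau>)" and "n2 = \<sigma> / (2 * \<tau>)"
  have "Gam_hom (-1) 0 0 0 0 1 0 1 (-\<tau>) \<sigma> (-\<sigma> * \<tau>) (\<sigma> * \<sigma> - \<tau>)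
      ((n1 / k - u1) / 2) ((u1 + n1 / k) / 2) ((n2 / k - u2) / 2) ((u2 + n2 / k) / 2)"
    unfolding Gam_hom_def bil_def u1_u2_def n1_def n2_def using assms(1) k
    by (simp add: field_simps) (intro conjI; algebra)
  moreover have "(n1 / k - u1) / 2 * ((u2 + n2 / k) / 2) - (u1 + n1 / k) / 2 * ((n2 / k - u2) / 2) \<noteq> 0"
    using assms(1) k(1) unfolding u1_u2_def n1_def n2_def by (simp add: field_simps)
  ultimately show ?thesis
    unfolding Gamma0_def Gam_cyclic_def by (simp add: lin_equiv_GamI)
qed

lemma lin_equiv_Gamma0_5_Gam_cyclic:
  assumes "\<tau> \<noteq> 0" "\<sigma> * \<sigma> < 4 * \<tau>"
  shows "lin_equiv (Gamma0 5) (Gam_cyclic \<sigma> \<tau>)"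
proof -
  define k where "k = sqrt (4 * \<tau> - \<sigma> * \<sigma>) / 2"
  have k: "k \<noteq> 0" "4 * k * k = 4 * \<tau> - \<sigma> * \<sigma>"
    using assms(2) by (auto simp: k_def)
  define u1 u2 n1 n2 where "u1 = \<sigma> / \<tau>" "u2 = -1 / \<tau>"
    and "n1 = 1 - \<sigma> * \<sigma> / (2 * \<tau>)" and "n2 = \<sigma> / (2 * \<tau>)"
  have "Gam_hom 1 0 0 1 (-1) 0 0 1 (-\<tau>) \<sigma> (-\<sigma> * \<tau>) (\<sigma> * \<sigma> - \<tau>) u1 (n1 / k) u2 (n2 / k)"
    unfolding Gam_hom_def bil_def u1_u2_def n1_def n2_def using assms(1) k
    by (simp add: field_simps) (intro conjI; algebra)
  moreover have "u1 * (n2 / k) - n1 / k * u2 \<noteq> 0"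
    using assms(1) k(1) unfolding u1_u2_def n1_def n2_def by (simp add: field_simps)
  ultimately show ?thesis
    unfolding Gamma0_def Gam_cyclic_def by (simp add: lin_equiv_GamI)
qed

lemma lin_equiv_Gamma0_3_Gam_cyclic:
  assumes "\<sigma> \<noteq> 0"
  shows "lin_equiv (Gamma0 3) (Gam_cyclic \<sigma> 0)"
proof -
  have "Gam_hom 0 0 0 0 0 1 0 1 0 \<sigma> 0 (\<sigma> * \<sigma>) 1 0 (-1 / \<sigma>) (1 / (\<sigma> * \<sigma>))"
    unfolding Gam_hom_def bil_def using assms by (simp add: field_simps)
  then show ?thesis
    unfolding Gamma0_def Gam_cyclic_def using assms by (simp add: lin_equiv_GamI)
qed

lemma lin_equiv_Gamma0_4_Gam_cyclic: "lin_equiv (Gamma0 4) (Gam_cyclic 0 0)"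
proof -
  have "Gam_hom 0 0 0 0 1 0 0 1 0 0 0 0 0 1 1 0"
    unfolding Gam_hom_def bil_def by simp
  then show ?thesis
    unfolding Gamma0_def Gam_cyclic_def by (simp add: lin_equiv_GamI)
qed

lemma Gam_cyclic_lin_equiv_Gamma0: "\<exists>i\<le>5. lin_equiv (Gamma0 i) (Gam_cyclic \<sigma> \<tau>)"
proof (cases "\<tau> = 0")
  case True
  then show ?thesis
    using lin_equiv_Gamma0_3_Gam_cyclic lin_equiv_Gamma0_4_Gam_cyclic
    by (cases "\<sigma> = 0") (auto intro: exI[of _ 3] exI[of _ 4])
next
  case False
  then show ?thesis
    using lin_equiv_Gamma0_1_Gam_cyclic lin_equiv_Gamma0_2_Gam_cyclic lin_equiv_Gamma0_5_Gam_cyclic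
    by (cases "\<sigma> * \<sigma>" "4 * \<tau>" rule: linorder_cases) (auto intro: exI[of _ 1] exI[of _ 2] exI[of _ 5])
qed

lemma Gam_eq_Gamma0_0_if_squares_parallel:
  assumes flat: "b * e = c * d" "b * c + d * d = a * d + b * f" "a * e + c * f = c * c + d * e"
    and parallel: "\<And>x1 x2. x1 * bil b d f x1 x2 x1 x2 = bil a c e x1 x2 x1 x2 * x2"
  shows "Gam a b c d e f = Gamma0 0"
proof -
  have "b = 0" "e = 0"
    using parallel[of 1 0] parallel[of 0 1] by (simp_all add: bil_def)
  moreover have "a = 2 * d" "f = 2 * c"
    using parallel[of 1 1] parallel[of 1 "-1"] \<open>b = 0\<close> \<open>e = 0\<close> by (simp_all add: bil_def)
  moreover have "d = 0" "c = 0"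
    using flat(2,3) calculation by (simp_all add: algebra_simps)
  ultimately show ?thesis
    by (simp add: Gamma0_def)
qed

lemma flat_Gam_lin_equiv_Gamma0:
  assumes "flat (Gam a b c d e f)"
  shows "\<exists>i\<le>5. lin_equiv (Gam a b c d e f) (Gamma0 i)"
proof (cases "\<forall>x1 x2. x1 * bil b d f x1 x2 x1 x2 = bil a c e x1 x2 x1 x2 * x2")
  case True
  then have "Gam a b c d e f = Gamma0 0"
    using assms unfolding flat_Gam_iff by (blast intro: Gam_eq_Gamma0_0_if_squares_parallel)
  then show ?thesis
    using lin_equiv_refl by auto
next
  case False
  then obtain x1 x2 where "x1 * bil b d f x1 x2 x1 x2 - bil a c e x1 x2 x1 x2 * x2 \<noteq> 0"
    by auto
  then obtain \<sigma> \<tau> where "lin_equiv (Gam_cyclic \<sigma> \<tau>) (Gam a b c d e f)"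
    using assms unfolding flat_Gam_iff Gam_cyclic_def by (blast intro: lin_equiv_GamI Gam_hom_cyclic)
  moreover obtain i where "i \<le> 5" "lin_equiv (Gamma0 i) (Gam_cyclic \<sigma> \<tau>)"
    using Gam_cyclic_lin_equiv_Gamma0 by blast
  ultimately show ?thesis
    by (meson lin_equiv_sym lin_equiv_trans)
qed

lemma not_lin_equiv_Gamma0_2_5: "\<not> lin_equiv (Gam (-1) 0 0 0 0 1) (Gam 1 0 0 1 (-1) 0)"
proof
  assume "lin_equiv (Gam (-1) 0 0 0 0 1) (Gam 1 0 0 1 (-1) 0)"
  then obtain p q r s where det: "p * s - q * r \<noteq> 0"
    and hom: "Gam_hom (-1) 0 0 0 0 1 1 0 0 1 (-1) 0 p q r s"
    unfolding lin_equiv_Gam_iff by blast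
  have "p * q - r * s = 0" "p * s + r * q = 0"
    using hom unfolding Gam_hom_def bil_def by (auto simp: algebra_simps)
  moreover have "(p * p + r * r) * (q * q + s * s) = (p * q - r * s)\<^sup>2 + (p * s + r * q)\<^sup>2"
    by (simp add: power2_eq_square algebra_simps)
  ultimately have "p * p + r * r = 0 \<or> q * q + s * s = 0"
    by simp
  then show False
    using det by (auto simp: sum_squares_eq_zero_iff)
qed

lemma not_lin_equiv_GamI:
  assumes "\<And>p q r s. Gam_hom a' b' c' d' e' f' a b c d e f p q r s \<Longrightarrow> p * s - q * r \<noteq> 0 \<Longrightarrow> False"
  shows "\<not> lin_equiv (Gam a' b' c' d' e' f') (Gam a b c d e f)"
  using assms unfolding lin_equiv_Gam_iff by blast

lemma Gamma0_not_lin_equiv: "i < j \<Longrightarrow> j \<le> 5 \<Longrightarrow> \<not> lin_equiv (Gamma0 i) (Gamma0 j)"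
  apply (subgoal_tac "(i = 0 \<or> i = 1 \<or> i = 2 \<or> i = 3 \<or> i = 4) \<and> (j = 1 \<or> j = 2 \<or> j = 3 \<or> j = 4 \<or> j = 5)")
   apply (elim conjE disjE; hypsubst_thin; simp add: Gamma0_def not_lin_equiv_Gamma0_2_5;
      rule not_lin_equiv_GamI; unfold Gam_hom_def bil_def; algebra)
  apply presburger
  done

theorem theorem3p2:
  fixes a b c d e f :: real
  assumes "flat (Gam a b c d e f)"
  shows "(\<exists>i\<le>5. lin_equiv (Gam a b c d e f) (Gamma0 i))
     \<and> (\<forall>i\<le>5. \<forall>j\<le>5. i \<noteq> j \<longrightarrow> \<not> lin_equiv (Gamma0 i) (Gamma0 j))"
proof (intro conjI allI impI)
  show "\<exists>i\<le>5. lin_equiv (Gam a b c d e f) (Gamma0 i)"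
    using assms by (rule flat_Gam_lin_equiv_Gamma0)
  fix i j :: nat
  assume "i \<le> 5" "j \<le> 5" "i \<noteq> j"
  then show "\<not> lin_equiv (Gamma0 i) (Gamma0 j)"
    using Gamma0_not_lin_equiv lin_equiv_sym by (metis linorder_neq_iff)
qed

end
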